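(* Let $\{p_{(R,\alpha)}(\mathbf{x})\}_{(R,\alpha)}$ be a replacement rule satisfying the Fixation Axiom and Assumption 1. Then the linear system $$d^\circ_gv_g=\sum_{h\in G}e^\circ_{gh}v_h\ \ (g\in G),\qquad \sum_{g\in G}v_g=n$$ has a unique solution $(v_g)_{g\in G}$, and $v_g\ge 0$ for every $g\in G$.
   Context: $G$ is a finite nonempty set of genetic sites, $n=|G|$; a state is $\mathbf{x}\in\{0,1\}^G$; $\mathbf{a}$ is the all-zero state and $\mathbf{A}$ the all-one state. A replacement event is $(R,\alpha)$ with $R\subseteq G$, $\alpha:R\to G$; a replacement rule gives for each state a probability distribution $\{p_{(R,\alpha)}(\mathbf{x})\}$ over events. Fixation Axiom: there exist $g\in G$, $m\ge1$, events $(R_k,\alpha_k)_{k=1}^m$ with $p_{(R_k,\alpha_k)}(\mathbf{x})>0$ for all $k$ and all states $\mathbf{x}$, $g\in R_k$ for some $k$, and $\tilde\alpha_1\circ\cdots\circ\tilde\alpha_m(h)=g$ for all $h\in G$, where $\tilde\alpha_k$ equals $\alpha_k$ on $R_k$ and the identity elsewhere. Assumption 1: $p_{(R,\alpha)}(\mathbf{A})=p_{(R,\alpha)}(\mathbf{a})=:p^\circ_{(R,\alpha)}$ for every event. Then $e^\circ_{gh}=\sum_{(R,\alpha):h\in R,\alpha(h)=g}p^\circ_{(R,\alpha)}$ and $d^\circ_g=\sum_he^\circ_{hg}$. *)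

theory Defs
  imports Complex_Main "HOL-Library.FuncSet"
begin

text \<open>A state x in {0,1}^G is encoded as the
subset of G where x equals 1; so the all-zero state a is {} and the all-one state A is G.
A replacement event (R, alpha) with R a subset of G and alpha : R -> G is encoded as a pair
whose second component is an extensional function (undefined outside R), so that each
event has exactly one representation.\<close>

type_synonym 'g event = "'g set \<times> ('g \<Rightarrow> 'g)"

definition states :: "'g set \<Rightarrow> 'g set set" where
  "states G = Pow G"

definition events :: "'g set \<Rightarrow> 'g event set" where
  "events G = {(R, \<alpha>). R \<subseteq> G \<and> \<alpha> \<in> R \<rightarrow>\<^sub>E G}"

definition replacement_rule :: "'g set \<Rightarrow> ('g set \<Rightarrow> 'g event \<Rightarrow> real) \<Rightarrow> bool" where
  "replacement_rule G p \<longleftrightarrow>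
     (\<forall>x \<in> states G. (\<forall>e \<in> events G. p x e \<ge> 0) \<and> (\<Sum>e \<in> events G. p x e) = 1)"

definition ext_map :: "'g event \<Rightarrow> 'g \<Rightarrow> 'g" where
  "ext_map ev h = (if h \<in> fst ev then snd ev h else h)"

definition fixation_axiom :: "'g set \<Rightarrow> ('g set \<Rightarrow> 'g event \<Rightarrow> real) \<Rightarrow> bool" where
  "fixation_axiom G p \<longleftrightarrow>
     (\<exists>g \<in> G. \<exists>evs :: 'g event list. length evs \<ge> 1 \<and>
        (\<forall>k < length evs. evs ! k \<in> events G \<and> (\<forall>x \<in> states G. p x (evs ! k) > 0)) \<and>
        (\<exists>k < length evs. g \<in> fst (evs ! k)) \<and>
        (\<forall>h \<in> G. foldr (\<circ>) (map ext_map evs) id h = g))"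

definition assumption1 :: "'g set \<Rightarrow> ('g set \<Rightarrow> 'g event \<Rightarrow> real) \<Rightarrow> bool" where
  "assumption1 G p \<longleftrightarrow> (\<forall>e \<in> events G. p G e = p {} e)"

definition p_circ :: "('g set \<Rightarrow> 'g event \<Rightarrow> real) \<Rightarrow> 'g event \<Rightarrow> real" where
  "p_circ p e = p {} e"

definition e_circ :: "'g set \<Rightarrow> ('g set \<Rightarrow> 'g event \<Rightarrow> real) \<Rightarrow> 'g \<Rightarrow> 'g \<Rightarrow> real" where
  "e_circ G p g h = (\<Sum>ev \<in> {ev \<in> events G. h \<in> fst ev \<and> snd ev h = g}. p_circ p ev)"

definition d_circ :: "'g set \<Rightarrow> ('g set \<Rightarrow> 'g event \<Rightarrow> real) \<Rightarrow> 'g \<Rightarrow> real" where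
  "d_circ G p g = (\<Sum>h \<in> G. e_circ G p h g)"

definition lin_system :: "'g set \<Rightarrow> ('g set \<Rightarrow> 'g event \<Rightarrow> real) \<Rightarrow> ('g \<Rightarrow> real) \<Rightarrow> bool" where
  "lin_system G p v \<longleftrightarrow>
     v \<in> extensional G \<and>
     (\<forall>g \<in> G. d_circ G p g * v g = (\<Sum>h \<in> G. e_circ G p g h * v h)) \<and>
     (\<Sum>g \<in> G. v g) = real (card G)"

end

theory Submission
  imports Defs "Jordan_Normal_Form.Determinant"
begin

text \<open>The homogeneous equations say that v is a kernel vector of
L = diag(d_circ) - e_circ, whose columns sum to zero; hence L is
singular and a nonzero solution exists. As e_circ is nonnegative, the positive
part of a solution is again a solution (its surplus is nonnegative and sums to zero), and
a nonnegative solution that is positive at h is positive at every g that replaces h with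
positive probability. By the Fixation Axiom every site leads to one common site this way,
so no solution takes both signs. A nonzero solution can therefore be normalized to a
nonnegative one, and two normalized solutions coincide since their difference sums to
zero.\<close>

lemma zero_column_sums_imp_nontrivial_kernel:
  fixes A :: "'i \<Rightarrow> 'i \<Rightarrow> 'a :: idom"
  assumes fin: "finite I" and ne: "I \<noteq> {}" and col: "\<And>j. j \<in> I \<Longrightarrow> (\<Sum>i\<in>I. A i j) = 0"
  shows "\<exists>w. (\<exists>i\<in>I. w i \<noteq> 0) \<and> (\<forall>i\<in>I. (\<Sum>j\<in>I. A i j * w j) = 0)"
proof -
  define n where "n = card I"
  obtain f where f: "bij_betw f {0..<n} I"
    using ex_bij_betw_nat_finite[OF fin] n_def by blast
  have reindex: "(\<Sum>j\<in>I. F j) = (\<Sum>k=0..<n. F (f k))" for F :: "'i \<Rightarrow> 'a"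
    using sum.reindex_bij_betw[OF f, of F] by simp
  have f_in: "f k \<in> I" if "k < n" for k
    using f that by (auto dest: bij_betwE)
  define M where "M = mat n n (\<lambda>(k, l). A (f k) (f l))"
  have M: "M \<in> carrier_mat n n" unfolding M_def by simp
  have "(\<Sum>k=0..<n. A (f k) (f l)) = 0" if "l < n" for l
    using col[OF f_in[OF that]] by (simp add: reindex)
  then have "M\<^sup>T *\<^sub>v vec n (\<lambda>_. 1) = 0\<^sub>v n"
    by (intro eq_vecI) (auto simp: M_def scalar_prod_def)
  moreover have "vec n (\<lambda>_. 1) \<noteq> (0\<^sub>v n :: 'a vec)"
  proof -
    have "n > 0" using fin ne n_def by (simp add: card_gt_0_iff)
    then show ?thesis by (metis index_vec index_zero_vec(1) zero_neq_one)
  qed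
  ultimately have "det M\<^sup>T = 0"
    using det_0_iff_vec_prod_zero[of "M\<^sup>T" n] M by (metis transpose_carrier_mat vec_carrier)
  then have "det M = 0" using det_transpose[OF M] by simp
  then obtain v where v: "v \<in> carrier_vec n" "v \<noteq> 0\<^sub>v n" "M *\<^sub>v v = 0\<^sub>v n"
    using det_0_iff_vec_prod_zero[OF M] by auto
  define w where "w i = v $ inv_into {0..<n} f i" for i
  have w_f: "w (f k) = v $ k" if "k < n" for k
    using f that unfolding w_def bij_betw_def by (simp add: inv_into_f_f)
  obtain k where k: "k < n" "v $ k \<noteq> 0"
    using v(1,2) by (metis eq_vecI carrier_vecD index_zero_vec(1,2))
  have "(\<Sum>j\<in>I. A i j * w j) = 0" if "i \<in> I" for i
  proof -
    obtain l where l: "l < n" "i = f l"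
      using f \<open>i \<in> I\<close> by (metis atLeastLessThan_iff bij_betw_iff_bijections)
    have "(M *\<^sub>v v) $ l = 0" using v(3) l by simp
    then show ?thesis
      using l v(1) by (simp add: M_def scalar_prod_def reindex w_f)
  qed
  moreover have "w (f k) \<noteq> 0" using w_f k by simp
  ultimately show ?thesis using f_in[OF k(1)] by blast
qed

definition balanced :: "'g set \<Rightarrow> ('g \<Rightarrow> 'g \<Rightarrow> 'a :: comm_ring) \<Rightarrow> ('g \<Rightarrow> 'a) \<Rightarrow> bool" where
  "balanced G E v \<longleftrightarrow> (\<forall>g\<in>G. (\<Sum>h\<in>G. E h g) * v g = (\<Sum>h\<in>G. E g h * v h))"

definition replacement_graph :: "'g set \<Rightarrow> ('g \<Rightarrow> 'g \<Rightarrow> 'a :: linordered_idom) \<Rightarrow> 'g rel" where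
  "replacement_graph G E = {(h, g). h \<in> G \<and> g \<in> G \<and> E g h > 0}"

lemma balanced_uminus: "balanced G E v \<Longrightarrow> balanced G E (\<lambda>g. - v g)"
  unfolding balanced_def by (simp add: sum_negf)

lemma balanced_diff:
  "balanced G E u \<Longrightarrow> balanced G E v \<Longrightarrow> balanced G E (\<lambda>g. u g - v g)"
  unfolding balanced_def by (simp add: right_diff_distrib sum_subtractf)

lemma balanced_mult: "balanced G E v \<Longrightarrow> balanced G E (\<lambda>g. c * v g)"
  unfolding balanced_def by (simp add: sum_distrib_left mult.left_commute)

lemma balanced_restrict: "balanced G E (restrict v G) \<longleftrightarrow> balanced G E v"
  unfolding balanced_def by (simp cong: sum.cong)

lemma balanced_nontrivial_exists:
  fixes E :: "'g \<Rightarrow> 'g \<Rightarrow> 'a :: idom"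
  assumes "finite G" and "G \<noteq> {}"
  shows "\<exists>w. (\<exists>g\<in>G. w g \<noteq> 0) \<and> balanced G E w"
proof -
  define A where "A g h = (if g = h then (\<Sum>k\<in>G. E k g) else 0) - E g h" for g h
  have "(\<Sum>g\<in>G. A g h) = 0" if "h \<in> G" for h
    using that \<open>finite G\<close> by (simp add: A_def sum_subtractf)
  then obtain w where "\<exists>g\<in>G. w g \<noteq> 0" and "\<forall>g\<in>G. (\<Sum>h\<in>G. A g h * w h) = 0"
    using zero_column_sums_imp_nontrivial_kernel[OF assms] by blast
  moreover have "(\<Sum>h\<in>G. A g h * w h) = (\<Sum>h\<in>G. E h g) * w g - (\<Sum>h\<in>G. E g h * w h)"
    if "g \<in> G" for g
  proof -
    have "A g h * w h = (if g = h then (\<Sum>k\<in>G. E k g) * w h else 0) - E g h * w h" for h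
      by (simp add: A_def left_diff_distrib)
    then show ?thesis using that \<open>finite G\<close> by (simp add: sum_subtractf)
  qed
  ultimately show ?thesis unfolding balanced_def by auto
qed

lemma sum_mult_column_sums:
  fixes E :: "'g \<Rightarrow> 'g \<Rightarrow> 'a :: comm_semiring_0"
  shows "(\<Sum>g\<in>G. (\<Sum>h\<in>G. E h g) * v g) = (\<Sum>g\<in>G. \<Sum>h\<in>G. E g h * v h)"
proof -
  have "(\<Sum>g\<in>G. (\<Sum>h\<in>G. E h g) * v g) = (\<Sum>g\<in>G. \<Sum>h\<in>G. E h g * v g)"
    by (simp add: sum_distrib_right)
  also have "\<dots> = (\<Sum>h\<in>G. \<Sum>g\<in>G. E h g * v g)"
    by (rule sum.swap)
  finally show ?thesis .
qed

lemma balanced_pos_part: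
  fixes E :: "'g \<Rightarrow> 'g \<Rightarrow> 'a :: linordered_idom"
  assumes fin: "finite G" and nonneg: "\<And>g h. g \<in> G \<Longrightarrow> h \<in> G \<Longrightarrow> E g h \<ge> 0"
    and bal: "balanced G E v"
  shows "balanced G E (\<lambda>g. max (v g) 0)"
proof -
  define x where "x g = max (v g) 0" for g
  define surplus where "surplus g = (\<Sum>h\<in>G. E g h * x h) - (\<Sum>h\<in>G. E h g) * x g" for g
  have "surplus g \<ge> 0" if g: "g \<in> G" for g
  proof (cases "v g > 0")
    case True
    have "(\<Sum>h\<in>G. E g h * v h) \<le> (\<Sum>h\<in>G. E g h * x h)"
      by (rule sum_mono) (auto simp: x_def intro!: mult_left_mono nonneg g)
    then show ?thesis using bal g True unfolding balanced_def surplus_def x_def by auto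
  next
    case False
    have "0 \<le> (\<Sum>h\<in>G. E g h * x h)"
      by (rule sum_nonneg) (auto simp: x_def intro!: mult_nonneg_nonneg nonneg g)
    then show ?thesis using False unfolding surplus_def x_def by auto
  qed
  moreover have "sum surplus G = 0"
    unfolding surplus_def by (simp add: sum_subtractf sum_mult_column_sums)
  ultimately have "\<forall>g\<in>G. surplus g = 0"
    using sum_nonneg_eq_0_iff[OF fin] by blast
  then show ?thesis unfolding balanced_def surplus_def x_def by auto
qed

lemma balanced_nonneg_pos_along_replacement_graph:
  fixes E :: "'g \<Rightarrow> 'g \<Rightarrow> 'a :: linordered_idom"
  assumes fin: "finite G" and nonneg: "\<And>g h. g \<in> G \<Longrightarrow> h \<in> G \<Longrightarrow> E g h \<ge> 0"
    and bal: "balanced G E x" and x_nonneg: "\<And>g. g \<in> G \<Longrightarrow> x g \<ge> 0"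
    and path: "(a, b) \<in> (replacement_graph G E)\<^sup>*" and pos: "x a > 0"
  shows "x b > 0"
  using path
proof (induction rule: rtrancl_induct)
  case base
  show ?case using pos .
next
  case (step c b)
  then have edge: "c \<in> G" "b \<in> G" "E b c > 0" and "x c > 0"
    by (auto simp: replacement_graph_def)
  then have "(\<Sum>h\<in>G. E b h * x h) > 0"
    using fin by (intro sum_pos2[of G c]) (auto intro!: mult_nonneg_nonneg nonneg x_nonneg)
  moreover have "(\<Sum>h\<in>G. E h b) * x b = (\<Sum>h\<in>G. E b h * x h)"
    using bal edge(2) unfolding balanced_def by blast
  ultimately show ?case
    using x_nonneg[OF edge(2)] by (cases "x b = 0") auto
qed

context
  fixes G :: "'g set" and E :: "'g \<Rightarrow> 'g \<Rightarrow> 'a :: linordered_field" and root :: 'g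
  assumes finite: "finite G"
    and nonneg: "\<And>g h. g \<in> G \<Longrightarrow> h \<in> G \<Longrightarrow> E g h \<ge> 0"
    and reaches_root: "\<And>h. h \<in> G \<Longrightarrow> (h, root) \<in> (replacement_graph G E)\<^sup>*"
begin

lemma balanced_pos_imp_root_pos:
  assumes bal: "balanced G E v" and "a \<in> G" "v a > 0"
  shows "v root > 0"
proof -
  have "max (v root) 0 > 0"
    using balanced_nonneg_pos_along_replacement_graph[OF finite nonneg
        balanced_pos_part[OF finite nonneg bal] _ reaches_root[OF \<open>a \<in> G\<close>]] \<open>v a > 0\<close>
    by simp
  then show ?thesis by simp
qed

lemma balanced_no_sign_change:
  assumes bal: "balanced G E v" and "a \<in> G" "v a > 0" and "b \<in> G"
  shows "v b \<ge> 0"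
proof (rule ccontr)
  assume "\<not> v b \<ge> 0"
  then have "- v root > 0"
    using balanced_pos_imp_root_pos[OF balanced_uminus[OF bal] \<open>b \<in> G\<close>] by simp
  moreover have "v root > 0"
    using balanced_pos_imp_root_pos[OF bal \<open>a \<in> G\<close> \<open>v a > 0\<close>] .
  ultimately show False by simp
qed

lemma balanced_sum_pos_imp_nonneg:
  assumes bal: "balanced G E v" and "sum v G > 0" and "g \<in> G"
  shows "v g \<ge> 0"
proof -
  obtain a where "a \<in> G" "v a > 0"
    using \<open>sum v G > 0\<close> sum_nonpos[of G v] by force
  then show ?thesis using balanced_no_sign_change[OF bal] \<open>g \<in> G\<close> by blast
qed

lemma balanced_sum_eq_0_imp_zero:
  assumes bal: "balanced G E v" and "sum v G = 0" and "g \<in> G"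
  shows "v g = 0"
proof (rule ccontr)
  assume "v g \<noteq> 0"
  have "\<exists>w. balanced G E w \<and> sum w G = 0 \<and> w g > 0"
  proof (cases "v g > 0")
    case True
    then show ?thesis using bal \<open>sum v G = 0\<close> by blast
  next
    case False
    then show ?thesis
      using \<open>v g \<noteq> 0\<close> balanced_uminus[OF bal] \<open>sum v G = 0\<close>
      by (intro exI[of _ "\<lambda>h. - v h"]) (simp add: sum_negf)
  qed
  then obtain w where w: "balanced G E w" "sum w G = 0" "w g > 0" by blast
  then have "\<forall>h\<in>G. w h = 0"
    using balanced_no_sign_change[OF w(1) \<open>g \<in> G\<close> w(3)] sum_nonneg_eq_0_iff[OF finite] by blast
  then show False using w(3) \<open>g \<in> G\<close> by simp
qed

lemma normalized_balanced_exists: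
  assumes "G \<noteq> {}"
  shows "\<exists>v. v \<in> extensional G \<and> balanced G E v \<and> sum v G = of_nat (card G)"
proof -
  obtain w a where w: "balanced G E w" and a: "a \<in> G" "w a > 0"
  proof -
    obtain w a where "balanced G E w" "a \<in> G" "w a \<noteq> 0"
      using balanced_nontrivial_exists[OF finite assms] by blast
    then show thesis
      using that[of w a] that[of "\<lambda>h. - w h" a] balanced_uminus
      by (cases "w a > 0") auto
  qed
  define S where "S = sum w G"
  have "w a \<le> S"
    unfolding S_def using balanced_no_sign_change[OF w a]
    by (intro member_le_sum[OF a(1) _ finite]) blast
  with a have "S > 0" by simp
  define v where "v = restrict (\<lambda>g. of_nat (card G) / S * w g) G"
  have "balanced G E v"
    unfolding v_def balanced_restrict by (rule balanced_mult[OF w])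
  moreover have "sum v G = of_nat (card G)"
  proof -
    have "sum v G = (\<Sum>g\<in>G. of_nat (card G) / S * w g)"
      by (simp add: v_def)
    also have "\<dots> = of_nat (card G) / S * S"
      unfolding S_def by (rule sum_distrib_left[symmetric])
    finally show ?thesis using \<open>S > 0\<close> by simp
  qed
  ultimately show ?thesis unfolding v_def by auto
qed

lemma normalized_balanced_unique:
  assumes "G \<noteq> {}"
  shows "\<exists>!v. v \<in> extensional G \<and> balanced G E v \<and> sum v G = of_nat (card G)"
proof (rule ex_ex1I)
  show "\<exists>v. v \<in> extensional G \<and> balanced G E v \<and> sum v G = of_nat (card G)"
    using normalized_balanced_exists[OF assms] .
next
  fix v w
  assume v: "v \<in> extensional G \<and> balanced G E v \<and> sum v G = of_nat (card G)"
    and w: "w \<in> extensional G \<and> balanced G E w \<and> sum w G = of_nat (card G)"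
  have "balanced G E (\<lambda>g. v g - w g)" and "(\<Sum>g\<in>G. v g - w g) = 0"
    using v w by (simp_all add: balanced_diff sum_subtractf)
  then have "v g = w g" if "g \<in> G" for g
    using balanced_sum_eq_0_imp_zero that by fastforce
  then show "v = w" using v w by (intro extensionalityI) auto
qed

end

lemma foldr_comp_in_rtrancl:
  assumes step: "\<And>f x. f \<in> set fs \<Longrightarrow> x \<in> A \<Longrightarrow> f x \<in> A \<and> (x, f x) \<in> r\<^sup>*"
    and "x \<in> A"
  shows "foldr (\<circ>) fs id x \<in> A \<and> (x, foldr (\<circ>) fs id x) \<in> r\<^sup>*"
  using step
proof (induction fs)
  case Nil
  then show ?case using \<open>x \<in> A\<close> by simp
next
  case (Cons f fs)
  then show ?case by (metis comp_apply foldr.simps(2) list.set_intros rtrancl_trans)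
qed

lemma finite_events: "finite G \<Longrightarrow> finite (events G)"
proof -
  assume "finite G"
  have "events G = Sigma (Pow G) (\<lambda>R. R \<rightarrow>\<^sub>E G)" unfolding events_def by auto
  moreover have "finite (Sigma (Pow G) (\<lambda>R. R \<rightarrow>\<^sub>E G))"
    using \<open>finite G\<close> by (intro finite_SigmaI finite_PiE) (auto intro: finite_subset)
  ultimately show ?thesis by simp
qed

lemma p_circ_nonneg:
  assumes "replacement_rule G p" and "ev \<in> events G"
  shows "p_circ p ev \<ge> 0"
  using assms unfolding replacement_rule_def states_def p_circ_def by blast

lemma e_circ_nonneg:
  assumes "replacement_rule G p"
  shows "e_circ G p g h \<ge> 0"
  unfolding e_circ_def using p_circ_nonneg[OF assms] by (intro sum_nonneg) blast

lemma ext_map_in_replacement_graph: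
  assumes fin: "finite G" and rule: "replacement_rule G p"
    and ev: "ev \<in> events G" and pos: "p_circ p ev > 0" and "h \<in> G"
  shows "ext_map ev h \<in> G \<and> (h, ext_map ev h) \<in> (replacement_graph G (e_circ G p))\<^sup>*"
proof (cases "h \<in> fst ev")
  case True
  obtain R \<alpha> where ev_eq: "ev = (R, \<alpha>)" by (cases ev)
  with True have "h \<in> R" by simp
  with ev ev_eq have "\<alpha> h \<in> G" unfolding events_def by auto
  have "p_circ p ev \<le> e_circ G p (\<alpha> h) h"
    unfolding e_circ_def using ev ev_eq \<open>h \<in> R\<close> p_circ_nonneg[OF rule]
    by (intro member_le_sum) (auto intro: finite_subset[OF _ finite_events[OF fin]])
  with pos have "(h, \<alpha> h) \<in> replacement_graph G (e_circ G p)"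
    using \<open>h \<in> G\<close> \<open>\<alpha> h \<in> G\<close> unfolding replacement_graph_def by simp
  then show ?thesis using \<open>\<alpha> h \<in> G\<close> True ev_eq unfolding ext_map_def by auto
next
  case False
  then show ?thesis using \<open>h \<in> G\<close> unfolding ext_map_def by simp
qed

lemma lin_system_iff_balanced:
  "lin_system G p v \<longleftrightarrow>
     v \<in> extensional G \<and> balanced G (e_circ G p) v \<and> sum v G = real (card G)"
  unfolding lin_system_def balanced_def d_circ_def by simp

lemma fixation_axiom_imp_reaches_root:
  assumes fin: "finite G" and rule: "replacement_rule G p" and "fixation_axiom G p"
  obtains root where "\<And>h. h \<in> G \<Longrightarrow> (h, root) \<in> (replacement_graph G (e_circ G p))\<^sup>*"
proof -
  obtain root evs
    where evs: "\<forall>k < length evs. evs ! k \<in> events G \<and> (\<forall>x \<in> states G. p x (evs ! k) > 0)"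
      and fixates: "\<forall>h \<in> G. foldr (\<circ>) (map ext_map evs) id h = root"
    using \<open>fixation_axiom G p\<close> unfolding fixation_axiom_def by blast
  have positive: "ev \<in> events G \<and> p_circ p ev > 0" if "ev \<in> set evs" for ev
    using evs that unfolding p_circ_def states_def by (auto simp: in_set_conv_nth)
  have "(h, root) \<in> (replacement_graph G (e_circ G p))\<^sup>*" if "h \<in> G" for h
  proof -
    have "(h, foldr (\<circ>) (map ext_map evs) id h) \<in> (replacement_graph G (e_circ G p))\<^sup>*"
    proof (rule conjunct2[OF foldr_comp_in_rtrancl[OF _ that]])
      fix f x
      assume "f \<in> set (map ext_map evs)" and "x \<in> G"
      then obtain ev where "ev \<in> set evs" and "f = ext_map ev" by auto
      then show "f x \<in> G \<and> (x, f x) \<in> (replacement_graph G (e_circ G p))\<^sup>*"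
        using ext_map_in_replacement_graph[OF fin rule] positive \<open>x \<in> G\<close> by blast
    qed
    then show ?thesis using fixates that by simp
  qed
  then show thesis by (rule that)
qed

theorem proposition1:
  fixes G :: "'g set" and p :: "'g set \<Rightarrow> 'g event \<Rightarrow> real"
  assumes "finite G" and "G \<noteq> {}"
    and "replacement_rule G p"
    and "fixation_axiom G p"
    and "assumption1 G p"
  shows "(\<exists>!v. lin_system G p v) \<and> (\<forall>v. lin_system G p v \<longrightarrow> (\<forall>g \<in> G. v g \<ge> 0))"
proof -
  obtain root where "\<And>h. h \<in> G \<Longrightarrow> (h, root) \<in> (replacement_graph G (e_circ G p))\<^sup>*"
    using fixation_axiom_imp_reaches_root[OF assms(1,3,4)] by blast
  note rooted = assms(1) e_circ_nonneg[OF assms(3)] this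
  show ?thesis
    unfolding lin_system_iff_balanced
    using normalized_balanced_unique[OF rooted assms(2)]
      balanced_sum_pos_imp_nonneg[OF rooted] assms(1,2)
    by (simp add: card_gt_0_iff)
qed

end
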